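(* Let $\mathcal{A}$ be a finite set of arms, $1\le B\le|\mathcal{A}|$, $\epsilon>0$, and fix a sequence of cost functions $c_1,\dots,c_T:\mathcal{A}\to[0,1]$. Let $C_i(a)=\sum_{t=1}^i c_t(a)$ and $\tilde C_i(a)=C_i(a)-p(a)$, where the $p(a)$, $a\in\mathcal{A}$, are independent exponential random variables with rate $\epsilon$ (mean $1/\epsilon$), the same for all rounds. Let $\tilde a_t^{*,j}$ be the $j$-th lowest arm after the first $t$ rounds according to $\tilde C_t$, and let $\tilde S_t^*=\{\tilde a_{t-1}^{*,j}: j\in[B]\}$. Then for every round $t$, \[\mathbb{E}\left[\mathbb{1}[\tilde a_t^{*,1}\notin\tilde S_t^*]\right]\le\mathbb{E}\left[\epsilon^B c_t(\tilde S_t^* )\right],\] where $c_t(S):=\min_{a\in S}c_t(a)$. *)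

theory Defs
  imports "HOL-Probability.Probability"
begin

definition cum_cost :: "(nat \<Rightarrow> 'a \<Rightarrow> real) \<Rightarrow> nat \<Rightarrow> 'a \<Rightarrow> real" where
  "cum_cost c i a = (\<Sum>s\<in>{1..i}. c s a)"

definition pert_cost :: "(nat \<Rightarrow> 'a \<Rightarrow> real) \<Rightarrow> ('a \<Rightarrow> real) \<Rightarrow> nat \<Rightarrow> 'a \<Rightarrow> real" where
  "pert_cost c p i a = cum_cost c i a - p a"

text \<open>Arms sorted from lowest to highest perturbed cumulative cost after i rounds
  (ties, a null event, broken by the linear order on arms; sort_key is stable).\<close>
definition ranked_arms :: "'a::linorder set \<Rightarrow> (nat \<Rightarrow> 'a \<Rightarrow> real) \<Rightarrow> ('a \<Rightarrow> real) \<Rightarrow> nat \<Rightarrow> 'a list" where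
  "ranked_arms A c p i = sort_key (pert_cost c p i) (sorted_list_of_set A)"

definition jth_arm :: "'a::linorder set \<Rightarrow> (nat \<Rightarrow> 'a \<Rightarrow> real) \<Rightarrow> ('a \<Rightarrow> real) \<Rightarrow> nat \<Rightarrow> nat \<Rightarrow> 'a" where
  "jth_arm A c p i j = ranked_arms A c p i ! (j - 1)"

definition top_set :: "'a::linorder set \<Rightarrow> nat \<Rightarrow> (nat \<Rightarrow> 'a \<Rightarrow> real) \<Rightarrow> ('a \<Rightarrow> real) \<Rightarrow> nat \<Rightarrow> 'a set" where
  "top_set A B c p t = {jth_arm A c p (t - 1) j | j. j \<in> {1..B}}"

definition set_cost :: "(nat \<Rightarrow> 'a \<Rightarrow> real) \<Rightarrow> nat \<Rightarrow> 'a set \<Rightarrow> real" where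
  "set_cost c t S = Min (c t ` S)"

definition pert_measure :: "'a set \<Rightarrow> real \<Rightarrow> ('a \<Rightarrow> real) measure" where
  "pert_measure A eps = PiM A (\<lambda>_. density lborel (exponential_density eps))"

end

theory Submission
  imports Defs
begin

(* Fix a candidate top set S after t - 1 rounds and let m be the smallest perturbed cost
   C_(t-1) z - p z of an arm z outside S. That S is the top set means p y >= C_(t-1) y - m for
   every y in S. If moreover the leader after round t lies outside S, its perturbed cost after
   round t is at least m and at most that of y, so also p y <= C_(t-1) y - m + c_t y: the
   perturbation of every arm of S lies in a window of width c_t y just above a threshold that
   depends only on the perturbations outside S. The exponential law has constant hazard rate
   eps, so, conditionally on the perturbations outside S and by independence, all windows are
   hit with at most prod_(y in S) eps c_t y <= eps^B c_t(S) times the probability that all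
   thresholds are strictly exceeded, and that event forces S to be the top set. Summing over
   the possible S gives the claim. *)

section \<open>Ranking of arms\<close>

lemma insort_key_cong_order:
  assumes "\<forall>a\<in>insert x (set ys). \<forall>b\<in>insert x (set ys). f a \<le> f b \<longleftrightarrow> g a \<le> g b"
  shows "insort_key f x ys = insort_key g x ys"
  using assms by (induction ys) auto

lemma sort_key_cong_order:
  fixes f :: "'a \<Rightarrow> 'b::linorder" and g :: "'a \<Rightarrow> 'c::linorder"
  assumes "\<forall>a\<in>set xs. \<forall>b\<in>set xs. f a \<le> f b \<longleftrightarrow> g a \<le> g b"
  shows "sort_key f xs = sort_key g xs"
  using assms
proof (induction xs)
  case (Cons x xs)
  then have "sort_key f xs = sort_key g xs" by simp
  moreover have "insort_key f x (sort_key g xs) = insort_key g x (sort_key g xs)"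
    by (rule insort_key_cong_order) (use Cons.prems in auto)
  ultimately show ?case by simp
qed simp

lemma set_ranked_arms: "finite A \<Longrightarrow> set (ranked_arms A c p i) = A"
  and distinct_ranked_arms: "finite A \<Longrightarrow> distinct (ranked_arms A c p i)"
  and length_ranked_arms: "finite A \<Longrightarrow> length (ranked_arms A c p i) = card A"
  and sorted_ranked_arms: "sorted (map (pert_cost c p i) (ranked_arms A c p i))"
  by (auto simp: ranked_arms_def distinct_card)

lemma top_set_eq_take:
  assumes "finite A" "B \<le> card A"
  shows "top_set A B c p t = set (take B (ranked_arms A c p (t - 1)))"
proof -
  have "top_set A B c p t = (!) (ranked_arms A c p (t - 1)) ` (\<lambda>j. j - 1) ` {1..B}"
    unfolding top_set_def jth_arm_def by blast
  also have "(\<lambda>j. j - 1) ` {1..B} = {0..<B}"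
    by (auto simp: image_iff intro!: bexI[of _ "Suc _"])
  finally show ?thesis
    using assms by (simp add: nth_image length_ranked_arms)
qed

lemma pert_cost_top_set_le:
  assumes "finite A" "B \<le> card A" "y \<in> top_set A B c p t" "z \<in> A - top_set A B c p t"
  shows "pert_cost c p (t - 1) y \<le> pert_cost c p (t - 1) z"
proof -
  let ?xs = "ranked_arms A c p (t - 1)" and ?f = "pert_cost c p (t - 1)"
  have "sorted (map ?f (take B ?xs) @ map ?f (drop B ?xs))"
    by (simp add: sorted_ranked_arms flip: map_append)
  then have sorted: "\<forall>u\<in>set (take B ?xs). \<forall>v\<in>set (drop B ?xs). ?f u \<le> ?f v"
    unfolding sorted_append by simp
  have "set ?xs = set (take B ?xs) \<union> set (drop B ?xs)"
    by (metis append_take_drop_id set_append)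
  then have "z \<in> set (drop B ?xs)"
    using assms(1,4) top_set_eq_take[OF assms(1,2)] set_ranked_arms by blast
  with sorted assms(3) show ?thesis
    unfolding top_set_eq_take[OF assms(1,2)] by blast
qed

lemma top_set_subset: "finite A \<Longrightarrow> B \<le> card A \<Longrightarrow> top_set A B c p t \<subseteq> A"
  by (metis top_set_eq_take set_ranked_arms set_take_subset)

lemma card_top_set: "finite A \<Longrightarrow> B \<le> card A \<Longrightarrow> card (top_set A B c p t) = B"
  by (simp add: top_set_eq_take distinct_card distinct_ranked_arms length_ranked_arms)

lemma top_set_eqI:
  assumes "finite A" "B \<le> card A" "S \<subseteq> A" "card S = B"
    and "\<forall>y\<in>S. \<forall>z\<in>A - S. pert_cost c p (t - 1) y < pert_cost c p (t - 1) z"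
  shows "top_set A B c p t = S"
proof (rule ccontr)
  let ?T = "top_set A B c p t"
  assume "?T \<noteq> S"
  have T: "?T \<subseteq> A" "card ?T = card S"
    using assms(1,2,4) by (simp_all add: top_set_subset card_top_set)
  have "\<not> ?T \<subseteq> S"
  proof
    assume "?T \<subseteq> S"
    with assms(1,3) T(2) have "?T = S" by (intro card_subset_eq) (auto intro: finite_subset)
    with \<open>?T \<noteq> S\<close> show False ..
  qed
  then obtain z where z: "z \<in> ?T" "z \<notin> S" by blast
  have "\<not> S \<subseteq> ?T"
  proof
    assume "S \<subseteq> ?T"
    with assms(1) T have "S = ?T" by (intro card_subset_eq) (auto intro: finite_subset)
    with \<open>?T \<noteq> S\<close> show False by simp
  qed
  then obtain y where y: "y \<in> S" "y \<notin> ?T" by blast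
  have "pert_cost c p (t - 1) z \<le> pert_cost c p (t - 1) y"
    using pert_cost_top_set_le[OF assms(1,2) z(1)] y assms(3) by blast
  moreover have "pert_cost c p (t - 1) y < pert_cost c p (t - 1) z"
    using assms(5) y(1) z T(1) by blast
  ultimately show False by simp
qed

lemma ranked_arms_Cons:
  assumes "finite A" "A \<noteq> {}"
  obtains ys where "ranked_arms A c p t = jth_arm A c p t 1 # ys"
proof -
  have "ranked_arms A c p t \<noteq> []"
    using assms by (simp flip: set_empty add: set_ranked_arms)
  then show ?thesis
    using that by (cases "ranked_arms A c p t") (simp_all add: jth_arm_def)
qed

lemma jth_arm_1_in: "finite A \<Longrightarrow> A \<noteq> {} \<Longrightarrow> jth_arm A c p t 1 \<in> A"
  by (metis ranked_arms_Cons list.set_intros(1) set_ranked_arms)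

lemma pert_cost_jth_arm_1_le:
  assumes "finite A" "y \<in> A"
  shows "pert_cost c p t (jth_arm A c p t 1) \<le> pert_cost c p t y"
proof -
  obtain ys where ys: "ranked_arms A c p t = jth_arm A c p t 1 # ys"
    using assms ranked_arms_Cons by blast
  then have "y = jth_arm A c p t 1 \<or> y \<in> set ys"
    using assms set_ranked_arms by (metis set_ConsD)
  then show ?thesis
    using sorted_ranked_arms[of c p t A] unfolding ys by auto
qed

lemma pert_cost_step: "1 \<le> t \<Longrightarrow> pert_cost c p t a = pert_cost c p (t - 1) a + c t a"
  by (cases t) (auto simp: pert_cost_def cum_cost_def)

section \<open>Measurability of the ranking\<close>

lemma measurable_determined_by_finite_events:
  assumes "finite I" and events: "\<And>i. i \<in> I \<Longrightarrow> {x \<in> space M. P i x} \<in> sets M"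
    and determined: "\<And>x y. x \<in> space M \<Longrightarrow> y \<in> space M
      \<Longrightarrow> (\<forall>i\<in>I. P i x \<longleftrightarrow> P i y) \<Longrightarrow> h x = h y"
  shows "h \<in> measurable M (count_space UNIV)"
proof (rule measurableI)
  fix X
  define pattern where "pattern x = {i \<in> I. P i x}" for x
  define cell where "cell r = {x \<in> space M. \<forall>i\<in>I. P i x \<longleftrightarrow> i \<in> r}" for r
  define R where "R = pattern ` (h -` X \<inter> space M)"
  have "h -` X \<inter> space M = (\<Union>r\<in>R. cell r)"
  proof (intro equalityI subsetI)
    fix x assume "x \<in> h -` X \<inter> space M"
    then have "pattern x \<in> R" "x \<in> cell (pattern x)"
      unfolding R_def cell_def pattern_def by auto
    then show "x \<in> (\<Union>r\<in>R. cell r)" by blast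
  next
    fix x assume "x \<in> (\<Union>r\<in>R. cell r)"
    then obtain y where y: "y \<in> space M" "h y \<in> X" and x: "x \<in> cell (pattern y)"
      unfolding R_def by blast
    then have "x \<in> space M" "h x = h y"
      using determined[of x y] unfolding cell_def pattern_def by auto
    with y show "x \<in> h -` X \<inter> space M" by simp
  qed
  also have "\<dots> \<in> sets M"
  proof (rule sets.finite_UN)
    have "R \<subseteq> Pow I"
      unfolding R_def pattern_def by blast
    then show "finite R"
      using \<open>finite I\<close> by (simp add: finite_subset)
    fix r
    show "cell r \<in> sets M"
      unfolding cell_def
    proof (rule sets.sets_Collect_finite_All[OF _ \<open>finite I\<close>])
      fix i assume "i \<in> I"
      then show "{x \<in> space M. P i x \<longleftrightarrow> i \<in> r} \<in> sets M"
        using events sets.compl_sets[OF events] by (cases "i \<in> r") (simp_all add: Diff_eq Collect_neg_eq)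
    qed
  qed
  finally show "h -` X \<inter> space M \<in> sets M" .
qed simp

lemma measurable_ranked_arms:
  assumes "finite A" and components: "\<And>a. a \<in> A \<Longrightarrow> (\<lambda>p. p a) \<in> borel_measurable M"
  shows "(\<lambda>p. ranked_arms A c p i) \<in> measurable M (count_space UNIV)"
proof (rule measurable_determined_by_finite_events[where I = "A \<times> A"
      and P = "\<lambda>ab p. pert_cost c p i (fst ab) \<le> pert_cost c p i (snd ab)"])
  fix ab assume "ab \<in> A \<times> A"
  then have [measurable]: "(\<lambda>p. p (fst ab)) \<in> borel_measurable M" "(\<lambda>p. p (snd ab)) \<in> borel_measurable M"
    using components by auto
  show "{p \<in> space M. pert_cost c p i (fst ab) \<le> pert_cost c p i (snd ab)} \<in> sets M"
    unfolding pert_cost_def by measurable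
next
  fix p q assume same: "\<forall>ab\<in>A \<times> A. pert_cost c p i (fst ab) \<le> pert_cost c p i (snd ab)
    \<longleftrightarrow> pert_cost c q i (fst ab) \<le> pert_cost c q i (snd ab)"
  have "pert_cost c p i a \<le> pert_cost c p i b \<longleftrightarrow> pert_cost c q i a \<le> pert_cost c q i b"
    if "a \<in> A" "b \<in> A" for a b
    using same that by (metis SigmaI fst_conv snd_conv)
  then show "ranked_arms A c p i = ranked_arms A c q i"
    unfolding ranked_arms_def using \<open>finite A\<close> by (intro sort_key_cong_order) simp
qed (use assms in simp)

lemma measurable_top_set:
  assumes "finite A" "\<And>a. a \<in> A \<Longrightarrow> (\<lambda>p. p a) \<in> borel_measurable M"
  shows "(\<lambda>p. top_set A B c p t) \<in> measurable M (count_space UNIV)"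
proof -
  have "(\<lambda>p. top_set A B c p t)
      = (\<lambda>xs. {xs ! (j - 1) |j. j \<in> {1..B}}) \<circ> (\<lambda>p. ranked_arms A c p (t - 1))"
    by (simp add: fun_eq_iff top_set_def jth_arm_def)
  then show ?thesis
    using measurable_comp[OF measurable_ranked_arms[OF assms] measurable_count_space] by simp
qed

lemma measurable_jth_arm:
  assumes "finite A" "\<And>a. a \<in> A \<Longrightarrow> (\<lambda>p. p a) \<in> borel_measurable M"
  shows "(\<lambda>p. jth_arm A c p t j) \<in> measurable M (count_space UNIV)"
proof -
  have "(\<lambda>p. jth_arm A c p t j) = (\<lambda>xs. xs ! (j - 1)) \<circ> (\<lambda>p. ranked_arms A c p t)"
    by (simp add: fun_eq_iff jth_arm_def)
  then show ?thesis
    using measurable_comp[OF measurable_ranked_arms[OF assms] measurable_count_space] by simp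
qed

section \<open>Windows of exponential perturbations\<close>

lemma exponential_survival:
  assumes "0 < eps"
  shows "emeasure (density lborel (exponential_density eps)) {r<..} = ennreal (if 0 \<le> r then exp (- eps * r) else 1)"
proof -
  let ?D = "density lborel (exponential_density eps)"
  interpret prob_space ?D
    using assms by (rule prob_space_exponential_density)
  have "emeasure ?D {..r} = erlang_CDF 0 eps r"
    using assms by (rule emeasure_erlang_density)
  then have CDF: "prob {..r} = erlang_CDF 0 eps r"
    using assms by (simp add: emeasure_eq_measure)
  have "prob {r<..} = prob (space ?D - {..r})"
    by (intro arg_cong[where f = prob]) auto
  also have "\<dots> = 1 - prob {..r}"
    by (rule prob_compl) simp
  finally show ?thesis
    using CDF by (simp add: emeasure_eq_measure erlang_CDF_0)
qed

lemma exponential_window_le: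
  assumes "0 < eps" "0 \<le> w"
  shows "emeasure (density lborel (exponential_density eps)) {r..r + w}
    \<le> ennreal (eps * w) * emeasure (density lborel (exponential_density eps)) {r<..}"
proof -
  define survival where "survival = (if 0 \<le> r then exp (- eps * r) else 1)"
  have "0 \<le> survival"
    by (simp add: survival_def)
  have density_le: "exponential_density eps x \<le> eps * survival" if "r \<le> x" for x
  proof (cases "0 \<le> x")
    case True
    have "exp (- x * eps) \<le> survival"
      using that True assms(1) by (auto simp: survival_def mult.commute[of eps])
    then show ?thesis
      using True assms(1) by (simp add: exponential_density_def)
  qed (use \<open>0 \<le> survival\<close> assms(1) in \<open>simp add: exponential_density_def\<close>)
  have "emeasure (density lborel (exponential_density eps)) {r..r + w}
      = (\<integral>\<^sup>+x. ennreal (exponential_density eps x) * indicator {r..r + w} x \<partial>lborel)"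
    by (simp add: emeasure_density)
  also have "\<dots> \<le> (\<integral>\<^sup>+x. ennreal (eps * survival) * indicator {r..r + w} x \<partial>lborel)"
    using density_le by (intro nn_integral_mono) (simp split: split_indicator add: ennreal_leI)
  also have "\<dots> = ennreal (eps * survival) * ennreal w"
    using assms(2) by (simp add: nn_integral_cmult_indicator)
  also have "\<dots> = ennreal (eps * w) * ennreal survival"
    using assms \<open>0 \<le> survival\<close> by (simp add: ennreal_mult mult_ac)
  finally show ?thesis
    using exponential_survival[OF assms(1)] by (simp add: survival_def)
qed

lemma (in product_sigma_finite) emeasure_PiM_le_by_fibres:
  assumes "finite I" "finite J" "I \<inter> J = {}"
    and "U \<in> sets (PiM (I \<union> J) M)" "L \<in> sets (PiM (I \<union> J) M)"
    and fibres: "\<And>x. x \<in> space (PiM I M) \<Longrightarrow> (\<integral>\<^sup>+z. indicator U (merge I J (x, z)) \<partial>PiM J M)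
      \<le> (\<integral>\<^sup>+z. k * indicator L (merge I J (x, z)) \<partial>PiM J M)"
  shows "emeasure (PiM (I \<union> J) M) U \<le> k * emeasure (PiM (I \<union> J) M) L"
proof -
  have "emeasure (PiM (I \<union> J) M) U
      = (\<integral>\<^sup>+x. (\<integral>\<^sup>+z. indicator U (merge I J (x, z)) \<partial>PiM J M) \<partial>PiM I M)"
    using assms(1-4) by (simp add: product_nn_integral_fold flip: nn_integral_indicator)
  also have "\<dots> \<le> (\<integral>\<^sup>+x. (\<integral>\<^sup>+z. k * indicator L (merge I J (x, z)) \<partial>PiM J M) \<partial>PiM I M)"
    by (intro nn_integral_mono fibres)
  also have "\<dots> = (\<integral>\<^sup>+p. k * indicator L p \<partial>PiM (I \<union> J) M)"
    using assms(1-3,5) by (intro product_nn_integral_fold[symmetric]) auto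
  also have "\<dots> = k * emeasure (PiM (I \<union> J) M) L"
    using assms(5) by (simp add: nn_integral_cmult_indicator)
  finally show ?thesis .
qed

lemma emeasure_PiM_windows_boxes_le:
  fixes D :: "real measure" and a w :: "'a \<Rightarrow> real" and k :: "'a \<Rightarrow> ennreal"
  assumes "finite J" "sigma_finite_measure D" "sets D = sets borel"
    and window: "\<And>y r. y \<in> J \<Longrightarrow> emeasure D {r..r + w y} \<le> k y * emeasure D {r<..}"
  shows "emeasure (PiM J (\<lambda>_. D)) (\<Pi>\<^sub>E y\<in>J. {a y..a y + w y})
    \<le> (\<Prod>y\<in>J. k y) * emeasure (PiM J (\<lambda>_. D)) (\<Pi>\<^sub>E y\<in>J. {a y<..})"
proof -
  interpret product_sigma_finite "\<lambda>_. D"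
    unfolding product_sigma_finite_def using assms(2) by simp
  have "emeasure (PiM J (\<lambda>_. D)) (\<Pi>\<^sub>E y\<in>J. {a y..a y + w y}) = (\<Prod>y\<in>J. emeasure D {a y..a y + w y})"
    using assms(1,3) by (intro emeasure_PiM) auto
  also have "\<dots> \<le> (\<Prod>y\<in>J. k y * emeasure D {a y<..})"
    using window by (intro prod_mono_ennreal)
  also have "\<dots> = (\<Prod>y\<in>J. k y) * emeasure (PiM J (\<lambda>_. D)) (\<Pi>\<^sub>E y\<in>J. {a y<..})"
    using assms(1,3) by (simp add: prod.distrib emeasure_PiM)
  finally show ?thesis .
qed

lemma emeasure_PiM_windows_le:
  fixes D :: "real measure" and \<theta> :: "'a \<Rightarrow> ('a \<Rightarrow> real) \<Rightarrow> real"
    and w :: "'a \<Rightarrow> real" and k :: "'a \<Rightarrow> ennreal"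
  assumes "finite I" "finite J" "I \<inter> J = {}"
    and "sigma_finite_measure D" and sets_D: "sets D = sets borel"
    and window: "\<And>y r. y \<in> J \<Longrightarrow> emeasure D {r..r + w y} \<le> k y * emeasure D {r<..}"
    and \<theta>_measurable: "\<And>y. y \<in> J \<Longrightarrow> \<theta> y \<in> borel_measurable (PiM (I \<union> J) (\<lambda>_. D))"
    and \<theta>_local: "\<And>y p q. y \<in> J \<Longrightarrow> (\<And>i. i \<in> I \<Longrightarrow> p i = q i) \<Longrightarrow> \<theta> y p = \<theta> y q"
  defines "P \<equiv> PiM (I \<union> J) (\<lambda>_. D)"
  assumes E: "E \<subseteq> {p \<in> space P. \<forall>y\<in>J. \<theta> y p \<le> p y \<and> p y \<le> \<theta> y p + w y}"
  shows "emeasure P E \<le> (\<Prod>y\<in>J. k y) * emeasure P {p \<in> space P. \<forall>y\<in>J. \<theta> y p < p y}"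
proof -
  interpret product_sigma_finite "\<lambda>_. D"
    unfolding product_sigma_finite_def using \<open>sigma_finite_measure D\<close> by simp
  define U where "U = {p \<in> space P. \<forall>y\<in>J. \<theta> y p \<le> p y \<and> p y \<le> \<theta> y p + w y}"
  define L where "L = {p \<in> space P. \<forall>y\<in>J. \<theta> y p < p y}"
  have component: "(\<lambda>p. p y) \<in> borel_measurable P" if "y \<in> J" for y
    using measurable_component_singleton[of y "I \<union> J" "\<lambda>_. D"] measurable_cong_sets[OF refl sets_D] that
    unfolding P_def by blast
  have U_sets: "U \<in> sets P" and L_sets: "L \<in> sets P"
    unfolding U_def L_def using \<open>finite J\<close> component \<theta>_measurable[folded P_def]
    by (intro sets.sets_Collect_finite_All sets.sets_Collect_conj borel_measurable_le borel_measurable_less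
        borel_measurable_add borel_measurable_const; blast)+
  have "emeasure P U \<le> (\<Prod>y\<in>J. k y) * emeasure P L"
    unfolding P_def
  proof (rule emeasure_PiM_le_by_fibres[OF assms(1-3) U_sets[unfolded P_def] L_sets[unfolded P_def]])
    fix x assume x: "x \<in> space (PiM I (\<lambda>_. D))"
    define a where "a y = \<theta> y (merge I J (x, undefined))" for y
    have "\<theta> y (merge I J (x, z)) = a y" "merge I J (x, z) y = z y" if "y \<in> J" for y z
      unfolding a_def using that \<open>I \<inter> J = {}\<close> by (auto intro: \<theta>_local simp: merge_def)
    moreover have "merge I J (x, z) \<in> space P" if "z \<in> space (PiM J (\<lambda>_. D))" for z
      using x that unfolding P_def by (auto simp: space_PiM PiE_iff merge_def extensional_def)
    ultimately have U_fibre: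
        "indicator U (merge I J (x, z)) = (indicator (\<Pi>\<^sub>E y\<in>J. {a y..a y + w y}) z :: ennreal)"
      and L_fibre: "indicator L (merge I J (x, z)) = (indicator (\<Pi>\<^sub>E y\<in>J. {a y<..}) z :: ennreal)"
      if "z \<in> space (PiM J (\<lambda>_. D))" for z
      using that unfolding U_def L_def by (auto simp: indicator_def space_PiM PiE_iff)
    have boxes: "(\<Pi>\<^sub>E y\<in>J. {a y..a y + w y}) \<in> sets (PiM J (\<lambda>_. D))"
      "(\<Pi>\<^sub>E y\<in>J. {a y<..}) \<in> sets (PiM J (\<lambda>_. D))"
      using \<open>finite J\<close> sets_D by (auto intro!: sets_PiM_I_finite)
    have "(\<integral>\<^sup>+z. indicator U (merge I J (x, z)) \<partial>PiM J (\<lambda>_. D))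
        = emeasure (PiM J (\<lambda>_. D)) (\<Pi>\<^sub>E y\<in>J. {a y..a y + w y})"
      using boxes by (simp add: U_fibre cong: nn_integral_cong)
    also have "\<dots> \<le> (\<Prod>y\<in>J. k y) * emeasure (PiM J (\<lambda>_. D)) (\<Pi>\<^sub>E y\<in>J. {a y<..})"
      using assms(2,4,5) window by (rule emeasure_PiM_windows_boxes_le)
    also have "\<dots> = (\<integral>\<^sup>+z. (\<Prod>y\<in>J. k y) * indicator L (merge I J (x, z)) \<partial>PiM J (\<lambda>_. D))"
      using boxes by (simp add: L_fibre nn_integral_cmult_indicator cong: nn_integral_cong)
    finally show "(\<integral>\<^sup>+z. indicator U (merge I J (x, z)) \<partial>PiM J (\<lambda>_. D))
        \<le> (\<integral>\<^sup>+z. (\<Prod>y\<in>J. k y) * indicator L (merge I J (x, z)) \<partial>PiM J (\<lambda>_. D))" .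
  qed
  moreover have "emeasure P E \<le> emeasure P U"
    using E U_sets unfolding U_def by (rule emeasure_mono)
  ultimately show ?thesis
    unfolding L_def by (rule order_trans[rotated])
qed

section \<open>Leaving the top set\<close>

lemma top_set_overtaken_window:
  assumes "finite A" "B \<le> card A" "1 \<le> t" "\<And>a. a \<in> A \<Longrightarrow> 0 \<le> c t a"
    and "top_set A B c p t = S" "jth_arm A c p t 1 \<notin> S" "y \<in> S"
  defines "m \<equiv> Min (pert_cost c p (t - 1) ` (A - S))"
  shows "pert_cost c p (t - 1) y \<le> m" and "m \<le> pert_cost c p t y"
proof -
  let ?x = "jth_arm A c p t 1"
  have "S \<subseteq> A"
    using assms(1,2,5) top_set_subset by blast
  have "A \<noteq> {}"
    using assms(7) \<open>S \<subseteq> A\<close> by blast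
  then have x: "?x \<in> A - S"
    using assms(1,6) jth_arm_1_in by blast
  show "pert_cost c p (t - 1) y \<le> m"
    unfolding m_def using assms(1,5,7) x pert_cost_top_set_le[OF assms(1,2)] by (auto intro: Min.boundedI)
  have "m \<le> pert_cost c p (t - 1) ?x"
    unfolding m_def using assms(1) x by (intro Min_le) auto
  also have "\<dots> \<le> pert_cost c p t ?x"
    using assms(3,4) x by (simp add: pert_cost_step)
  also have "\<dots> \<le> pert_cost c p t y"
    using assms(1,7) \<open>S \<subseteq> A\<close> pert_cost_jth_arm_1_le by blast
  finally show "m \<le> pert_cost c p t y" .
qed

lemma top_set_eq_if_below_Min:
  assumes "finite A" "S \<subseteq> A" "card S = B"
    and "\<forall>y\<in>S. pert_cost c p (t - 1) y < Min (pert_cost c p (t - 1) ` (A - S))"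
  shows "top_set A B c p t = S"
proof (rule top_set_eqI[OF assms(1) _ assms(2,3)])
  show "B \<le> card A"
    using assms(1-3) card_mono by blast
  show "\<forall>y\<in>S. \<forall>z\<in>A - S. pert_cost c p (t - 1) y < pert_cost c p (t - 1) z"
  proof (intro ballI)
    fix y z assume "y \<in> S" "z \<in> A - S"
    moreover have "Min (pert_cost c p (t - 1) ` (A - S)) \<le> pert_cost c p (t - 1) z"
      using assms(1) \<open>z \<in> A - S\<close> by (intro Min_le) auto
    ultimately show "pert_cost c p (t - 1) y < pert_cost c p (t - 1) z"
      using assms(4) by fastforce
  qed
qed

lemma prob_space_pert_measure: "0 < eps \<Longrightarrow> prob_space (pert_measure A eps)"
  unfolding pert_measure_def by (intro prob_space_PiM prob_space_exponential_density)

lemma pert_measure_component: "a \<in> A \<Longrightarrow> (\<lambda>p. p a) \<in> borel_measurable (pert_measure A eps)"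
  unfolding pert_measure_def
  using measurable_component_singleton[of a A "\<lambda>_. density lborel (exponential_density eps)"]
    measurable_cong_sets[OF refl sets_density] by simp

lemma emeasure_top_set_overtaken_le:
  fixes A :: "'a::linorder set"
  assumes "finite A" "0 < eps" "S \<subseteq> A" "card S = B" "1 \<le> t" "\<And>a. a \<in> A \<Longrightarrow> 0 \<le> c t a"
  defines "P \<equiv> pert_measure A eps"
  shows "emeasure P {p \<in> space P. top_set A B c p t = S \<and> jth_arm A c p t 1 \<notin> S}
    \<le> (\<Prod>y\<in>S. ennreal (eps * c t y))
      * emeasure P {p \<in> space P. \<forall>y\<in>S. pert_cost c p (t - 1) y < Min (pert_cost c p (t - 1) ` (A - S))}"
proof -
  let ?D = "density lborel (exponential_density eps)"
  have B: "B \<le> card A"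
    using assms(1,3,4) card_mono by blast
  define m where "m p = Min (pert_cost c p (t - 1) ` (A - S))" for p
  define \<theta> where "\<theta> y p = cum_cost c (t - 1) y - m p" for y p
  have P_split: "P = PiM ((A - S) \<union> S) (\<lambda>_. ?D)"
    unfolding P_def pert_measure_def using assms(3) by (simp add: Un_absorb2)
  have "emeasure P {p \<in> space P. top_set A B c p t = S \<and> jth_arm A c p t 1 \<notin> S}
      \<le> (\<Prod>y\<in>S. ennreal (eps * c t y)) * emeasure P {p \<in> space P. \<forall>y\<in>S. \<theta> y p < p y}"
    unfolding P_split
  proof (rule emeasure_PiM_windows_le)
    show "finite (A - S)" "finite S"
      using assms(1,3) finite_subset by auto
    show "sigma_finite_measure ?D"
      using prob_space_exponential_density[OF assms(2)] by (rule prob_space_imp_sigma_finite)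
    have "\<theta> y p \<le> p y \<and> p y \<le> \<theta> y p + c t y"
      if "top_set A B c p t = S" "jth_arm A c p t 1 \<notin> S" "y \<in> S" for p y
    proof -
      have "pert_cost c p (t - 1) y \<le> m p" "m p \<le> pert_cost c p t y"
        unfolding m_def using top_set_overtaken_window[OF assms(1) B assms(5,6) that] by auto
      then show ?thesis
        unfolding \<theta>_def using assms(5) by (simp add: pert_cost_step) (simp add: pert_cost_def)
    qed
    then show "{p \<in> space (PiM ((A - S) \<union> S) (\<lambda>_. ?D)).
          top_set A B c p t = S \<and> jth_arm A c p t 1 \<notin> S}
        \<subseteq> {p \<in> space (PiM ((A - S) \<union> S) (\<lambda>_. ?D)).
          \<forall>y\<in>S. \<theta> y p \<le> p y \<and> p y \<le> \<theta> y p + c t y}"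
      by blast
    fix y assume "y \<in> S"
    then show "emeasure ?D {r..r + c t y} \<le> ennreal (eps * c t y) * emeasure ?D {r<..}" for r
      using assms(2,3,6) by (intro exponential_window_le) auto
    have "m \<in> borel_measurable P"
      unfolding m_def pert_cost_def P_def using assms(1)
      by (auto intro!: borel_measurable_Min borel_measurable_diff pert_measure_component)
    then show "\<theta> y \<in> borel_measurable (PiM ((A - S) \<union> S) (\<lambda>_. ?D))"
      unfolding \<theta>_def P_split[symmetric] by (intro borel_measurable_diff borel_measurable_const)
    show "\<theta> y p = \<theta> y q" if "\<And>i. i \<in> A - S \<Longrightarrow> p i = q i" for p q
    proof -
      have "m p = m q"
        unfolding m_def pert_cost_def using that by (intro arg_cong[where f = Min] image_cong) auto
      then show ?thesis
        unfolding \<theta>_def by simp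
    qed
  qed auto
  moreover have below_iff: "\<theta> y p < p y \<longleftrightarrow> pert_cost c p (t - 1) y < m p" for y p
    unfolding \<theta>_def pert_cost_def by linarith
  ultimately show ?thesis
    by (simp only: below_iff m_def)
qed

lemma measure_top_set_overtaken_le:
  fixes A :: "'a::linorder set"
  assumes "finite A" "0 < eps" "S \<subseteq> A" "card S = B" "1 \<le> t" "\<And>a. a \<in> A \<Longrightarrow> 0 \<le> c t a"
  defines "P \<equiv> pert_measure A eps"
  shows "\<P>(p in P. top_set A B c p t = S \<and> jth_arm A c p t 1 \<notin> S)
    \<le> (\<Prod>y\<in>S. eps * c t y) * \<P>(p in P. top_set A B c p t = S)"
proof -
  interpret prob_space P
    unfolding P_def using assms(2) by (rule prob_space_pert_measure)
  define T where "T = {p \<in> space P. top_set A B c p t = S}"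
  have nonneg: "0 \<le> eps * c t y" if "y \<in> S" for y
    using that assms(2,3,6) by auto
  have "(\<lambda>p. top_set A B c p t) \<in> measurable P (count_space UNIV)"
    unfolding P_def using assms(1) pert_measure_component by (rule measurable_top_set)
  from measurable_sets[OF this, of "{S}"] have "T \<in> sets P"
    unfolding T_def by (simp add: vimage_def Int_def conj_commute)
  have below_T: "{p \<in> space P. \<forall>y\<in>S. pert_cost c p (t - 1) y < Min (pert_cost c p (t - 1) ` (A - S))} \<subseteq> T"
    unfolding T_def using top_set_eq_if_below_Min[OF assms(1,3,4)] by blast
  have "emeasure P {p \<in> space P. top_set A B c p t = S \<and> jth_arm A c p t 1 \<notin> S}
      \<le> (\<Prod>y\<in>S. ennreal (eps * c t y))
        * emeasure P {p \<in> space P. \<forall>y\<in>S. pert_cost c p (t - 1) y < Min (pert_cost c p (t - 1) ` (A - S))}"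
    unfolding P_def using assms(1-6) by (rule emeasure_top_set_overtaken_le)
  also have "\<dots> \<le> (\<Prod>y\<in>S. ennreal (eps * c t y)) * emeasure P T"
    using emeasure_mono[OF below_T \<open>T \<in> sets P\<close>] by (rule mult_left_mono) (rule zero_le)
  also have "\<dots> = ennreal ((\<Prod>y\<in>S. eps * c t y) * measure P T)"
  proof -
    have "(\<Prod>y\<in>S. ennreal (eps * c t y)) = ennreal (\<Prod>y\<in>S. eps * c t y)"
      using nonneg by (rule prod_ennreal)
    then show ?thesis
      using nonneg by (simp add: emeasure_eq_measure ennreal_mult prod_nonneg)
  qed
  finally show ?thesis
    unfolding T_def using nonneg by (simp add: emeasure_eq_measure prod_nonneg)
qed

lemma prod_le_Min:
  fixes f :: "'a \<Rightarrow> 'b::linordered_idom"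
  assumes "finite S" "S \<noteq> {}" "\<And>y. y \<in> S \<Longrightarrow> 0 \<le> f y \<and> f y \<le> 1"
  shows "prod f S \<le> Min (f ` S)"
proof -
  have "Min (f ` S) \<in> f ` S"
    using assms(1,2) by (intro Min_in) auto
  then obtain m where m: "m \<in> S" "f m = Min (f ` S)"
    by (metis imageE)
  have "prod f S = f m * prod f (S - {m})"
    using m(1) assms(1) by (simp add: prod.remove)
  also have "\<dots> \<le> f m * 1"
    using assms(3) m(1) by (intro mult_left_mono prod_le_1) auto
  finally show ?thesis
    using m(2) by simp
qed

lemma prod_le_set_cost:
  assumes "finite S" "S \<noteq> {}" "card S = B" "0 \<le> eps" "\<And>y. y \<in> S \<Longrightarrow> 0 \<le> c t y \<and> c t y \<le> 1"
  shows "(\<Prod>y\<in>S. eps * c t y) \<le> eps ^ B * set_cost c t S"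
proof -
  have "(\<Prod>y\<in>S. eps * c t y) = eps ^ B * (\<Prod>y\<in>S. c t y)"
    using assms(3) by (simp add: prod.distrib)
  also have "\<dots> \<le> eps ^ B * set_cost c t S"
    unfolding set_cost_def using assms by (intro mult_left_mono prod_le_Min) auto
  finally show ?thesis .
qed

section \<open>Summing over the possible top sets\<close>

lemma integral_finite_range_split:
  fixes f :: "'b \<Rightarrow> 'a \<Rightarrow> real"
  assumes "h \<in> measurable M (count_space UNIV)" "finite R" "\<And>x. x \<in> space M \<Longrightarrow> h x \<in> R"
    and "\<And>r. r \<in> R \<Longrightarrow> integrable M (f r)"
  shows "(\<integral>x. f (h x) x \<partial>M) = (\<Sum>r\<in>R. \<integral>x. f r x * indicator {x \<in> space M. h x = r} x \<partial>M)"
proof -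
  have "(\<integral>x. f (h x) x \<partial>M) = (\<integral>x. (\<Sum>r\<in>R. f r x * indicator {x \<in> space M. h x = r} x) \<partial>M)"
    using assms(2,3) by (intro Bochner_Integration.integral_cong) (auto simp: indicator_def if_distrib sum.If_cases)
  also have "\<dots> = (\<Sum>r\<in>R. \<integral>x. f r x * indicator {x \<in> space M. h x = r} x \<partial>M)"
  proof (intro Bochner_Integration.integral_sum integrable_real_mult_indicator assms(4))
    fix r
    have "h -` {r} \<inter> space M \<in> sets M"
      using assms(1) by (rule measurable_sets) simp
    then show "{x \<in> space M. h x = r} \<in> sets M"
      by (simp add: vimage_def Int_def conj_commute)
  qed
  finally show ?thesis .
qed

lemma integral_leader_outside_top_set:
  assumes "finite A" "B \<le> card A" "0 < eps"
  defines "P \<equiv> pert_measure A eps"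
  shows "(\<integral>p. (if jth_arm A c p t 1 \<notin> top_set A B c p t then 1 else 0) \<partial>P)
    = (\<Sum>S | S \<subseteq> A \<and> card S = B. \<P>(p in P. top_set A B c p t = S \<and> jth_arm A c p t 1 \<notin> S))"
proof -
  interpret prob_space P
    unfolding P_def using assms(3) by (rule prob_space_pert_measure)
  let ?top = "\<lambda>p. top_set A B c p t" and ?leader = "\<lambda>p. jth_arm A c p t 1"
  have top_measurable: "?top \<in> measurable P (count_space UNIV)"
    unfolding P_def by (rule measurable_top_set[OF assms(1) pert_measure_component])
  have leader_measurable: "?leader \<in> measurable P (count_space UNIV)"
    unfolding P_def by (rule measurable_jth_arm[OF assms(1) pert_measure_component])
  have top_range: "finite {S. S \<subseteq> A \<and> card S = B}" "?top p \<in> {S. S \<subseteq> A \<and> card S = B}" for p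
    using assms(1) top_set_subset[OF assms(1,2)] card_top_set[OF assms(1,2)] by simp_all
  have integrable: "integrable P (\<lambda>p. if ?leader p \<notin> S then 1 else 0 :: real)" for S
  proof -
    have "(\<lambda>a. if a \<notin> S then 1 else 0 :: real) \<in> borel_measurable (count_space UNIV)"
      by simp
    from measurable_compose[OF leader_measurable this] show ?thesis
      by (intro integrable_const_bound[where B = 1]) auto
  qed
  from integral_finite_range_split[where f = "\<lambda>S p. if ?leader p \<notin> S then 1 else 0",
      OF top_measurable top_range integrable]
  have "(\<integral>p. (if ?leader p \<notin> ?top p then 1 else 0 :: real) \<partial>P)
      = (\<Sum>S | S \<subseteq> A \<and> card S = B.
          \<integral>p. (if ?leader p \<notin> S then 1 else 0) * indicator {p \<in> space P. ?top p = S} p \<partial>P)"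
    by simp
  also have "\<dots> = (\<Sum>S | S \<subseteq> A \<and> card S = B. \<P>(p in P. ?top p = S \<and> ?leader p \<notin> S))"
  proof (intro sum.cong refl)
    fix S
    have "(\<lambda>p. (if ?leader p \<notin> S then 1 else 0) * indicator {p \<in> space P. ?top p = S} p :: real)
        = indicator {p \<in> space P. ?top p = S \<and> ?leader p \<notin> S}"
      by (auto simp: indicator_def fun_eq_iff)
    then show "(\<integral>p. (if ?leader p \<notin> S then 1 else 0) * indicator {p \<in> space P. ?top p = S} p \<partial>P)
        = \<P>(p in P. ?top p = S \<and> ?leader p \<notin> S)"
      by (simp add: Int_absorb2)
  qed
  finally show ?thesis .
qed

lemma integral_top_set_fun:
  fixes f :: "'a::linorder set \<Rightarrow> real"
  assumes "finite A" "B \<le> card A" "0 < eps"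
  defines "P \<equiv> pert_measure A eps"
  shows "(\<integral>p. f (top_set A B c p t) \<partial>P)
    = (\<Sum>S | S \<subseteq> A \<and> card S = B. f S * \<P>(p in P. top_set A B c p t = S))"
proof -
  interpret prob_space P
    unfolding P_def using assms(3) by (rule prob_space_pert_measure)
  have "(\<integral>p. f (top_set A B c p t) \<partial>P)
      = (\<Sum>S | S \<subseteq> A \<and> card S = B. \<integral>p. f S * indicator {p \<in> space P. top_set A B c p t = S} p \<partial>P)"
  proof (rule integral_finite_range_split[where h = "\<lambda>p. top_set A B c p t" and f = "\<lambda>S p. f S"])
    show "(\<lambda>p. top_set A B c p t) \<in> measurable P (count_space UNIV)"
      unfolding P_def by (rule measurable_top_set[OF assms(1) pert_measure_component])
    show "finite {S. S \<subseteq> A \<and> card S = B}"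
      using assms(1) by simp
    show "top_set A B c p t \<in> {S. S \<subseteq> A \<and> card S = B}" for p
      using top_set_subset[OF assms(1,2)] card_top_set[OF assms(1,2)] by simp
  qed simp
  then show ?thesis
    by (simp add: Int_absorb2)
qed

theorem lemma4:
  fixes A :: "'a::linorder set" and B T t :: nat and eps :: real
    and c :: "nat \<Rightarrow> 'a \<Rightarrow> real"
  assumes "finite A"
    and "1 \<le> B" and "B \<le> card A"
    and "eps > 0"
    and "\<And>s a. s \<in> {1..T} \<Longrightarrow> a \<in> A \<Longrightarrow> 0 \<le> c s a \<and> c s a \<le> 1"
    and "t \<in> {1..T}"
  shows "(\<integral>p. (if jth_arm A c p t 1 \<notin> top_set A B c p t then 1 else 0) \<partial>pert_measure A eps)
         \<le> (\<integral>p. eps ^ B * set_cost c t (top_set A B c p t) \<partial>pert_measure A eps)"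
proof -
  let ?P = "pert_measure A eps"
  have c_t: "0 \<le> c t a \<and> c t a \<le> 1" if "a \<in> A" for a
    using assms(5,6) that by blast
  have "(\<integral>p. (if jth_arm A c p t 1 \<notin> top_set A B c p t then 1 else 0) \<partial>?P)
      = (\<Sum>S | S \<subseteq> A \<and> card S = B.
          \<P>(p in ?P. top_set A B c p t = S \<and> jth_arm A c p t 1 \<notin> S))"
    using assms(1,3,4) by (rule integral_leader_outside_top_set)
  also have "\<dots> \<le> (\<Sum>S | S \<subseteq> A \<and> card S = B.
      eps ^ B * set_cost c t S * \<P>(p in ?P. top_set A B c p t = S))"
  proof (rule sum_mono)
    fix S assume S: "S \<in> {S. S \<subseteq> A \<and> card S = B}"
    then have "\<P>(p in ?P. top_set A B c p t = S \<and> jth_arm A c p t 1 \<notin> S)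
        \<le> (\<Prod>y\<in>S. eps * c t y) * \<P>(p in ?P. top_set A B c p t = S)"
      using assms(1,4,6) c_t by (intro measure_top_set_overtaken_le) auto
    also have "\<dots> \<le> eps ^ B * set_cost c t S * \<P>(p in ?P. top_set A B c p t = S)"
      using S assms(1,2,4) c_t finite_subset by (intro mult_right_mono prod_le_set_cost) auto
    finally show "\<P>(p in ?P. top_set A B c p t = S \<and> jth_arm A c p t 1 \<notin> S)
        \<le> eps ^ B * set_cost c t S * \<P>(p in ?P. top_set A B c p t = S)" .
  qed
  also have "\<dots> = (\<integral>p. eps ^ B * set_cost c t (top_set A B c p t) \<partial>?P)"
    using assms(1,3,4) by (rule integral_top_set_fun[symmetric])
  finally show ?thesis .
qed

end
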